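(* Let $\rho$ be a critical radius function on $\mathbb{R}^n$, $p(\cdot),q(\cdot)\in\mathcal{P}^{\log}(\mathbb{R}^n)$ and $s>1$ such that $1<p^-\le p(x)<q(x)\le q^+<\infty$ and $\frac1{p(\cdot)}-\frac1{q(\cdot)}=\frac1{s'}$. If $w\in A^\rho_{p(\cdot),q(\cdot)}$, then $w^{-s}\in A^\rho_{p'(\cdot)/s}$.
   Context: A critical radius function is $\rho:\mathbb{R}^n\to(0,\infty)$ with constants $c_\rho,N_\rho\ge1$ such that $c_\rho^{-1}\rho(x)\big(1+\frac{|x-y|}{\rho(x)}\big)^{-N_\rho}\le\rho(y)\le c_\rho\rho(x)\big(1+\frac{|x-y|}{\rho(x)}\big)^{N_\rho/(N_\rho+1)}$ for all $x,y$. $\mathcal{P}(\mathbb{R}^n)$: measurable $p(\cdot):\mathbb{R}^n\to[1,\infty]$; $p^\pm$ ess sup/inf; $p'(\cdot)$ pointwise conjugate; $\|\cdot\|_{p(\cdot)}$ the Luxemburg norm $\inf\{\lambda>0:\int(|f|/\lambda)^{p(x)}dx\le1\}$. $p\in\mathcal{P}^{\log}$: $p^+<\infty$ and there are $C,p_\infty$ with $|p(x)-p(y)|\le-C/\log|x-y|$ for $|x-y|<1/2$, $|p(x)-p_\infty|\le C/\log(e+|x|)$. A weight is a locally integrable $w$ with $0<w<\infty$ a.e. For an exponent $r(\cdot)$, $w\in A^\rho_{r(\cdot)}$ if there are $\theta\ge0,C>0$ with $\|w\chi_B\|_{r(\cdot)}\|w^{-1}\chi_B\|_{r'(\cdot)}\le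 C|B|(1+\frac r{\rho(x)})^\theta$ for all balls $B=B(x,r)$; $w\in A^\rho_{p(\cdot),q(\cdot)}$ if there are $\theta>0,C>0$ with $\|w\chi_B\|_{q(\cdot)}\|w^{-1}\chi_B\|_{p'(\cdot)}\le C\|\chi_B\|_{q(\cdot)}\|\chi_B\|_{p'(\cdot)}(1+\frac r{\rho(x)})^\theta$ for all balls $B=B(x,r)$. *)

theory Defs
  imports "HOL-Analysis.Analysis"
begin

definition critical_radius :: "('a::euclidean_space \<Rightarrow> real) \<Rightarrow> bool" where
  "critical_radius \<rho> \<longleftrightarrow> (\<forall>x. 0 < \<rho> x) \<and>
     (\<exists>c N. 1 \<le> c \<and> 1 \<le> N \<and>
       (\<forall>x y. inverse c * \<rho> x * (1 + dist x y / \<rho> x) powr (- N) \<le> \<rho> y \<and>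
              \<rho> y \<le> c * \<rho> x * (1 + dist x y / \<rho> x) powr (N / (N + 1))))"

definition var_exp :: "('a::euclidean_space \<Rightarrow> real) \<Rightarrow> bool" where
  "var_exp p \<longleftrightarrow> p \<in> borel_measurable lborel \<and> (\<forall>x. 1 \<le> p x)"

definition conj_exp :: "('a \<Rightarrow> real) \<Rightarrow> 'a \<Rightarrow> real" where
  "conj_exp p = (\<lambda>x. p x / (p x - 1))"

definition P_log :: "('a::euclidean_space \<Rightarrow> real) \<Rightarrow> bool" where
  "P_log p \<longleftrightarrow> var_exp p \<and> (\<exists>M. AE x in lborel. p x \<le> M) \<and>
     (\<exists>C p_inf. (\<forall>x y. dist x y < 1/2 \<longrightarrow> \<bar>p x - p y\<bar> \<le> - C / ln (dist x y)) \<and>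
                (\<forall>x. \<bar>p x - p_inf\<bar> \<le> C / ln (exp 1 + norm x)))"

text \<open>Luxemburg norm (valued in [0,\<infinity>], Inf of empty set is \<infinity>).\<close>
definition lux_norm :: "('a::euclidean_space \<Rightarrow> real) \<Rightarrow> ('a \<Rightarrow> real) \<Rightarrow> ennreal" where
  "lux_norm p f = (INF t\<in>{t::real. 0 < t \<and>
       (\<integral>\<^sup>+ x. ennreal ((\<bar>f x\<bar> / t) powr p x) \<partial>lborel) \<le> 1}. ennreal t)"

definition weight :: "('a::euclidean_space \<Rightarrow> real) \<Rightarrow> bool" where
  "weight w \<longleftrightarrow> w \<in> borel_measurable lborel \<and> (AE x in lborel. 0 < w x) \<and>
     (\<forall>K. compact K \<longrightarrow> set_integrable lborel K w)"

definition A_rho :: "('a::euclidean_space \<Rightarrow> real) \<Rightarrow> ('a \<Rightarrow> real) \<Rightarrow> ('a \<Rightarrow> real) \<Rightarrow> bool" where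
  "A_rho \<rho> r w \<longleftrightarrow> weight w \<and> (\<exists>\<theta> C. 0 \<le> \<theta> \<and> 0 < C \<and>
     (\<forall>x R. 0 < R \<longrightarrow>
        lux_norm r (\<lambda>y. w y * indicator (ball x R) y) *
        lux_norm (conj_exp r) (\<lambda>y. inverse (w y) * indicator (ball x R) y)
        \<le> ennreal (C * measure lborel (ball x R) * (1 + R / \<rho> x) powr \<theta>)))"

definition A_rho_pq :: "('a::euclidean_space \<Rightarrow> real) \<Rightarrow> ('a \<Rightarrow> real) \<Rightarrow> ('a \<Rightarrow> real) \<Rightarrow> ('a \<Rightarrow> real) \<Rightarrow> bool" where
  "A_rho_pq \<rho> p q w \<longleftrightarrow> weight w \<and> (\<exists>\<theta> C. 0 < \<theta> \<and> 0 < C \<and>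
     (\<forall>x R. 0 < R \<longrightarrow>
        lux_norm q (\<lambda>y. w y * indicator (ball x R) y) *
        lux_norm (conj_exp p) (\<lambda>y. inverse (w y) * indicator (ball x R) y)
        \<le> ennreal C * lux_norm q (indicator (ball x R)) *
           lux_norm (conj_exp p) (indicator (ball x R)) *
           ennreal ((1 + R / \<rho> x) powr \<theta>)))"

end

(*
  The Luxemburg norm turns powers into exponent rescalings: the norm of |f|^s for the exponent
  r/s is the s-th power of the norm of f for r.  Since (p'/s)' = q/s, the A^rho_{p'/s} product
  of w^-s on a ball B = B(x,R) is therefore at most the s-th power of the A^rho_{p,q} product,
  i.e. of C ||chi_B||_q ||chi_B||_p' (1 + R/rho(x))^theta.

  For an exponent r, ||chi_B||_r <= |B|^(1/r(x)) exp(delta |ln |B||), where delta bounds the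
  oscillation of 1/r on B.  The log-Hoelder conditions make delta |ln |B|| bounded on small
  balls and on balls far from the origin; on the remaining large balls near the origin, the
  growth bound of the critical radius gives ln R <= K + (N+1) ln(1 + R/rho(x)).  As
  1/q(x) + 1/p'(x) = 1/s, the s-th power of the bound is C' |B| (1 + R/rho(x))^theta'.
  Finally w^-s is locally integrable because w^-1 is locally in L^p' and s < p'.
*)
theory Submission
  imports Defs
begin

section \<open>Luxemburg norm and modular\<close>

definition var_modular :: "('a::euclidean_space \<Rightarrow> real) \<Rightarrow> ('a \<Rightarrow> real) \<Rightarrow> real \<Rightarrow> ennreal" where
  "var_modular p f t = (\<integral>\<^sup>+ x. ennreal ((\<bar>f x\<bar> / t) powr p x) \<partial>lborel)"

lemma lux_norm_var_modular:
  "lux_norm p f = (INF t\<in>{t. 0 < t \<and> var_modular p f t \<le> 1}. ennreal t)"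
  by (simp add: lux_norm_def var_modular_def)

lemma lux_norm_le:
  assumes "0 < t" "var_modular p f t \<le> 1"
  shows "lux_norm p f \<le> ennreal t"
  unfolding lux_norm_var_modular by (rule INF_lower2[of t]) (use assms in auto)

lemma lux_norm_lessE:
  assumes "lux_norm p f < ennreal v"
  obtains u where "0 < u" "u < v" "var_modular p f u \<le> 1"
  using assms unfolding lux_norm_var_modular INF_less_iff by (auto simp: ennreal_less_iff)

lemma var_modular_antimono:
  assumes "0 < u" "u \<le> v" "\<And>y. 0 \<le> p y"
  shows "var_modular p f v \<le> var_modular p f u"
  unfolding var_modular_def using assms
  by (intro nn_integral_mono ennreal_leI powr_mono2 divide_left_mono) auto

lemma lux_norm_le_ennrealI:
  assumes "0 \<le> b" "\<And>v. b < v \<Longrightarrow> var_modular p f v \<le> 1"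
  shows "lux_norm p f \<le> ennreal b"
proof (rule ennreal_le_epsilon)
  fix e :: real
  assume "0 < e"
  then have "lux_norm p f \<le> ennreal (b + e)"
    using assms by (intro lux_norm_le) auto
  then show "lux_norm p f \<le> ennreal b + ennreal e"
    using assms(1) \<open>0 < e\<close> by simp
qed

lemma var_modular_le_one_above_lux_norm:
  assumes "lux_norm p f < ennreal v" "\<And>y. 0 \<le> p y"
  shows "var_modular p f v \<le> 1"
proof -
  obtain u where "0 < u" "u < v" "var_modular p f u \<le> 1"
    using assms(1) by (rule lux_norm_lessE)
  then show ?thesis
    using var_modular_antimono[of u v p f] assms(2) by force
qed

lemma lux_norm_powr_le:
  fixes f g p r :: "'a::euclidean_space \<Rightarrow> real"
  assumes s: "0 < s" and p: "\<And>y. 0 \<le> p y"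
    and fg: "AE y in lborel. r y = p y / s \<and> \<bar>g y\<bar> = \<bar>f y\<bar> powr s"
    and b: "lux_norm p f \<le> ennreal b" "0 \<le> b"
  shows "lux_norm r g \<le> ennreal (b powr s)"
proof (rule lux_norm_le_ennrealI)
  fix t
  assume t: "b powr s < t"
  define v where "v = t powr (1 / s)"
  have "0 < t" using t powr_ge_zero[of b s] by linarith
  then have t_eq: "t = v powr s" using s by (simp add: v_def powr_powr)
  have "b = (b powr s) powr (1 / s)" using s b(2) by (simp add: powr_powr)
  also have "\<dots> < v" unfolding v_def using t s by (intro powr_less_mono2) auto
  finally have "lux_norm p f < ennreal v"
    using b by (simp add: ennreal_less_iff order_le_less_trans)
  then have "var_modular p f v \<le> 1" using p by (rule var_modular_le_one_above_lux_norm)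
  moreover have "var_modular r g t = var_modular p f v"
    unfolding var_modular_def
  proof (rule nn_integral_cong_AE)
    show "AE x in lborel. ennreal ((\<bar>g x\<bar> / t) powr r x) = ennreal ((\<bar>f x\<bar> / v) powr p x)"
      using fg
    proof eventually_elim
      case (elim x)
      then have "(\<bar>g x\<bar> / t) powr r x = ((\<bar>f x\<bar> / v) powr s) powr (p x / s)"
        by (simp add: t_eq powr_divide)
      also have "\<dots> = (\<bar>f x\<bar> / v) powr p x" using s by (simp add: powr_powr)
      finally show ?case by simp
    qed
  qed
  ultimately show "var_modular r g t \<le> 1" by simp
qed (simp add: b)

lemma lux_norm_powr_mult_le:
  fixes f1 f2 g1 g2 p1 p2 r1 r2 :: "'a::euclidean_space \<Rightarrow> real"
  assumes s: "0 < s" and p: "\<And>y. 0 \<le> p1 y" "\<And>y. 0 \<le> p2 y"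
    and fg: "AE y in lborel. r1 y = p1 y / s \<and> \<bar>g1 y\<bar> = \<bar>f1 y\<bar> powr s"
      "AE y in lborel. r2 y = p2 y / s \<and> \<bar>g2 y\<bar> = \<bar>f2 y\<bar> powr s"
    and G: "lux_norm p1 f1 * lux_norm p2 f2 \<le> ennreal G"
  shows "lux_norm r1 g1 * lux_norm r2 g2 \<le> ennreal (G powr s)"
proof (cases "lux_norm p1 f1 = 0 \<or> lux_norm p2 f2 = 0")
  case True
  then have "lux_norm r1 g1 = 0 \<or> lux_norm r2 g2 = 0"
    using lux_norm_powr_le[OF s p(1) fg(1), of 0] lux_norm_powr_le[OF s p(2) fg(2), of 0] by auto
  then show ?thesis by auto
next
  case False
  then have "lux_norm p1 f1 \<noteq> \<infinity>" "lux_norm p2 f2 \<noteq> \<infinity>"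
    using G by (auto simp: ennreal_mult_eq_top_iff top_unique)
  then obtain a b where a: "lux_norm p1 f1 = ennreal a" "0 \<le> a"
    and b: "lux_norm p2 f2 = ennreal b" "0 \<le> b"
    by (cases "lux_norm p1 f1" rule: ennreal_cases; cases "lux_norm p2 f2" rule: ennreal_cases) auto
  have "ennreal (a * b) \<le> ennreal G" using G a b by (simp add: ennreal_mult)
  moreover have "0 < a * b" using False a b by auto
  ultimately have "a * b \<le> G" by (auto simp: ennreal_le_iff2)
  have "lux_norm r1 g1 * lux_norm r2 g2 \<le> ennreal (a powr s) * ennreal (b powr s)"
    using lux_norm_powr_le[OF s p(1) fg(1)] lux_norm_powr_le[OF s p(2) fg(2)] a b
    by (intro mult_mono) auto
  also have "\<dots> = ennreal ((a * b) powr s)" using a b by (simp add: powr_mult ennreal_mult)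
  also have "\<dots> \<le> ennreal (G powr s)"
    using \<open>a * b \<le> G\<close> a b s by (intro ennreal_leI powr_mono2) auto
  finally show ?thesis .
qed

text \<open>The radius \<open>t = m powr \<beta>\<close>, with \<open>\<beta> = \<alpha> \<plusminus> \<delta>\<close> chosen according to the sign of \<open>ln m\<close>,
  makes \<open>t powr (- q y) \<le> 1 / m\<close> on \<open>B\<close>.\<close>
lemma lux_norm_indicator_le:
  fixes q :: "'a::euclidean_space \<Rightarrow> real"
  assumes B: "B \<in> sets lborel" "emeasure lborel B = ennreal m" "0 < m"
    and q: "AE y in lborel. y \<in> B \<longrightarrow> 0 < q y \<and> \<bar>1 / q y - \<alpha>\<bar> \<le> \<delta>"
  shows "lux_norm q (indicator B) \<le> ennreal (m powr \<alpha> * exp (\<delta> * \<bar>ln m\<bar>))"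
proof -
  define \<beta> where "\<beta> = (if 1 \<le> m then \<alpha> + \<delta> else \<alpha> - \<delta>)"
  define t where "t = m powr \<beta>"
  have t_eq: "t = m powr \<alpha> * exp (\<delta> * \<bar>ln m\<bar>)"
    using B(3)
    by (auto simp: t_def \<beta>_def powr_def not_le ln_less_zero algebra_simps simp flip: exp_add)
  have "var_modular q (indicator B) t \<le> (\<integral>\<^sup>+ y. ennreal (1 / m) * indicator B y \<partial>lborel)"
    unfolding var_modular_def
  proof (rule nn_integral_mono_AE)
    show "AE y in lborel.
        ennreal ((\<bar>indicator B y\<bar> / t) powr q y) \<le> ennreal (1 / m) * indicator B y"
      using q
    proof eventually_elim
      case (elim y)
      show ?case
      proof (cases "y \<in> B")
        case True
        with elim have q0: "0 < q y" and qa: "\<bar>1 / q y - \<alpha>\<bar> \<le> \<delta>" by auto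
        have "(1 / t) powr q y = m powr (- (\<beta> * q y))"
          using B(3) by (simp add: t_def powr_minus_divide powr_divide powr_powr)
        also have "\<dots> \<le> m powr (-1)"
        proof (cases "1 \<le> m")
          case True
          then have "1 / q y \<le> \<beta>" using qa by (simp add: \<beta>_def)
          then have "1 \<le> \<beta> * q y" using q0 by (simp add: field_simps)
          then show ?thesis using True by (intro powr_mono) auto
        next
          case False
          then have "\<beta> \<le> 1 / q y" using qa by (simp add: \<beta>_def)
          then have "\<beta> * q y \<le> 1" using q0 by (simp add: field_simps)
          then show ?thesis using False B(3) by (intro powr_mono') auto
        qed
        also have "\<dots> = 1 / m" using B(3) by (simp add: powr_minus_divide)
        finally show ?thesis using True by (simp add: ennreal_leI)
      qed simp
    qed
  qed
  also have "\<dots> = 1"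
    using B by (simp add: nn_integral_cmult_indicator flip: ennreal_mult)
  finally show ?thesis
    using lux_norm_le[of t q "indicator B"] B(3) t_eq by (simp add: t_def)
qed

lemma lux_norm_indicator_mult_le:
  fixes q r :: "'a::euclidean_space \<Rightarrow> real"
  assumes B: "B \<in> sets lborel" "emeasure lborel B = ennreal m" "0 < m"
    and q: "AE y in lborel. y \<in> B \<longrightarrow> 0 < q y \<and> \<bar>1 / q y - \<alpha>\<bar> \<le> \<delta>"
    and r: "AE y in lborel. y \<in> B \<longrightarrow> 0 < r y \<and> \<bar>1 / r y - \<beta>\<bar> \<le> \<delta>"
  shows "lux_norm q (indicator B) * lux_norm r (indicator B)
    \<le> ennreal (m powr (\<alpha> + \<beta>) * exp (2 * (\<delta> * \<bar>ln m\<bar>)))"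
proof -
  define E where "E = exp (\<delta> * \<bar>ln m\<bar>)"
  have "lux_norm q (indicator B) * lux_norm r (indicator B)
      \<le> ennreal (m powr \<alpha> * E) * ennreal (m powr \<beta> * E)"
    using lux_norm_indicator_le[OF B q] lux_norm_indicator_le[OF B r]
    by (intro mult_mono) (auto simp: E_def)
  also have "\<dots> = ennreal ((m powr \<alpha> * m powr \<beta>) * (E * E))"
    by (simp add: E_def ennreal_mult' mult_ac)
  also have "\<dots> = ennreal (m powr (\<alpha> + \<beta>) * exp (2 * (\<delta> * \<bar>ln m\<bar>)))"
    by (simp add: E_def powr_add mult_exp_exp)
  finally show ?thesis .
qed

lemma emeasure_superlevel_neq_zero:
  fixes f :: "'a::euclidean_space \<Rightarrow> real"
  assumes B: "B \<in> sets lborel" "emeasure lborel B \<noteq> 0"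
    and f: "f \<in> borel_measurable lborel" and pos: "AE y in lborel. y \<in> B \<longrightarrow> 0 < f y"
  obtains \<eta> where "0 < \<eta>" "emeasure lborel (B \<inter> {y. \<eta> < f y}) \<noteq> 0"
proof -
  define E where "E k = B \<inter> {y. 1 / real (Suc k) < f y}" for k
  have E: "E k \<in> sets lborel" for k unfolding E_def using B f by measurable
  have "\<exists>k. emeasure lborel (E k) \<noteq> 0"
  proof (rule ccontr)
    assume "\<not> ?thesis"
    then have "AE y in lborel. \<forall>k. y \<notin> E k"
      using E by (auto simp: AE_all_countable intro!: AE_not_in)
    then have "AE y in lborel. y \<notin> B"
      using pos by eventually_elim (auto simp: E_def elim: nat_approx_posE)
    then show False using B AE_iff_null_sets by blast
  qed
  then show thesis using that[of "1 / real (Suc _)"] by (auto simp: E_def)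
qed

lemma lux_norm_neq_zero:
  fixes f r :: "'a::euclidean_space \<Rightarrow> real"
  assumes B: "B \<in> sets lborel" "emeasure lborel B \<noteq> 0" "emeasure lborel B < \<infinity>"
    and f: "f \<in> borel_measurable lborel"
    and pos: "AE y in lborel. y \<in> B \<longrightarrow> 0 < f y \<and> 1 \<le> r y"
  shows "lux_norm r f \<noteq> 0"
proof
  assume norm0: "lux_norm r f = 0"
  have "AE y in lborel. y \<in> B \<longrightarrow> 0 < f y" using pos by (auto elim: eventually_mono)
  then obtain \<eta> where "0 < \<eta>" and E0: "emeasure lborel (B \<inter> {y. \<eta> < f y}) \<noteq> 0"
    by (rule emeasure_superlevel_neq_zero[OF B(1,2) f]) (rule that)
  define E where "E = B \<inter> {y. \<eta> < f y}"
  have E: "E \<in> sets lborel" unfolding E_def using B f by measurable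
  have "emeasure lborel E \<le> emeasure lborel B"
    using B(1) by (intro emeasure_mono) (auto simp: E_def)
  then have "emeasure lborel E \<noteq> \<infinity>" using B(3) by (auto simp: top_unique)
  then obtain e where e: "emeasure lborel E = ennreal e" "0 < e"
    using E0 unfolding E_def[symmetric] by (cases "emeasure lborel E" rule: ennreal_cases) auto
  have "lux_norm r f < ennreal (min \<eta> (\<eta> * e))" using norm0 \<open>0 < \<eta>\<close> e(2) by simp
  then obtain u where u: "0 < u" "u < min \<eta> (\<eta> * e)" "var_modular r f u \<le> 1"
    by (rule lux_norm_lessE)
  have "ennreal (\<eta> / u) * ennreal e = (\<integral>\<^sup>+ x. ennreal (\<eta> / u) * indicator E x \<partial>lborel)"
    using E e by (simp add: nn_integral_cmult_indicator)
  also have "\<dots> \<le> var_modular r f u"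
    unfolding var_modular_def
  proof (rule nn_integral_mono_AE)
    show "AE x in lborel. ennreal (\<eta> / u) * indicator E x \<le> ennreal ((\<bar>f x\<bar> / u) powr r x)"
      using pos
    proof eventually_elim
      case (elim x)
      show ?case
      proof (cases "x \<in> E")
        case True
        then have "x \<in> B" and fx: "\<eta> < f x" by (auto simp: E_def)
        with elim have r1: "1 \<le> r x" by auto
        have "1 \<le> \<bar>f x\<bar> / u" using fx u by (simp add: field_simps)
        have "\<eta> / u \<le> (\<bar>f x\<bar> / u) powr 1" using fx u \<open>0 < \<eta>\<close> by (simp add: divide_right_mono)
        also have "\<dots> \<le> (\<bar>f x\<bar> / u) powr r x" using \<open>1 \<le> \<bar>f x\<bar> / u\<close> r1 by (intro powr_mono)
        finally show ?thesis using True by (simp add: ennreal_leI)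
      qed simp
    qed
  qed
  also have "\<dots> \<le> 1" by (rule u(3))
  finally have "\<eta> / u * e \<le> 1" using u(1) \<open>0 < \<eta>\<close> e(2) by (simp flip: ennreal_mult)
  then show False using u \<open>0 < \<eta>\<close> e(2) by (simp add: field_simps)
qed

lemma powr_le_one_add_powr:
  fixes u s a :: real
  assumes "0 \<le> u" "0 < s" "s \<le> a"
  shows "u powr s \<le> 1 + u powr a"
proof (cases "u \<le> 1")
  case True
  then have "u powr s \<le> 1" using assms by (intro powr_le1) auto
  then show ?thesis using powr_ge_zero[of u a] by linarith
next
  case False
  then have "u powr s \<le> u powr a" using assms by (intro powr_mono) auto
  then show ?thesis by simp
qed

lemma nn_integral_powr_le_var_modular:
  fixes f r :: "'a::euclidean_space \<Rightarrow> real"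
  assumes t: "0 < t" and s: "0 < s" and B: "B \<in> sets lborel"
    and meas: "f \<in> borel_measurable lborel" "r \<in> borel_measurable lborel"
    and r: "AE y in lborel. y \<in> B \<longrightarrow> s \<le> r y"
  shows "(\<integral>\<^sup>+ y\<in>B. ennreal (\<bar>f y\<bar> powr s) \<partial>lborel)
    \<le> ennreal (t powr s) * (emeasure lborel B + var_modular r f t)"
proof -
  have "(\<integral>\<^sup>+ y\<in>B. ennreal (\<bar>f y\<bar> powr s) \<partial>lborel)
      \<le> (\<integral>\<^sup>+ y. ennreal (t powr s) * (indicator B y + ennreal ((\<bar>f y\<bar> / t) powr r y)) \<partial>lborel)"
  proof (rule nn_integral_mono_AE)
    show "AE y in lborel. ennreal (\<bar>f y\<bar> powr s) * indicator B y
        \<le> ennreal (t powr s) * (indicator B y + ennreal ((\<bar>f y\<bar> / t) powr r y))"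
      using r
    proof eventually_elim
      case (elim y)
      show ?case
      proof (cases "y \<in> B")
        case True
        have "\<bar>f y\<bar> powr s = t powr s * (\<bar>f y\<bar> / t) powr s"
          using t by (simp add: powr_divide)
        also have "\<dots> \<le> t powr s * (1 + (\<bar>f y\<bar> / t) powr r y)"
          using True elim t s by (intro mult_left_mono powr_le_one_add_powr) auto
        finally have "ennreal (\<bar>f y\<bar> powr s) \<le> ennreal (t powr s * (1 + (\<bar>f y\<bar> / t) powr r y))"
          by (rule ennreal_leI)
        then show ?thesis
          using True by (simp add: ennreal_mult)
      qed simp
    qed
  qed
  also have "\<dots> = ennreal (t powr s) * (emeasure lborel B + var_modular r f t)"
    unfolding var_modular_def using B meas by (simp add: nn_integral_cmult nn_integral_add)
  finally show ?thesis .
qed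

section \<open>Log-Hoelder exponents on balls\<close>

lemma conj_exp_inverse:
  assumes "1 < p x"
  shows "0 < conj_exp p x" "1 / conj_exp p x = 1 - 1 / p x"
  using assms by (auto simp: conj_exp_def field_simps)

lemma abs_inverse_diff_le:
  fixes a b :: real
  assumes "1 \<le> a" "1 \<le> b"
  shows "\<bar>1 / a - 1 / b\<bar> \<le> \<bar>a - b\<bar>" "\<bar>1 / a - 1 / b\<bar> \<le> 1"
proof -
  have "1 \<le> a * b" using assms by (metis mult_mono' mult_1 zero_le_one)
  have "\<bar>1 / a - 1 / b\<bar> = \<bar>b - a\<bar> / (a * b)" using assms by (simp add: field_simps abs_div)
  also have "\<dots> \<le> \<bar>b - a\<bar>" using \<open>1 \<le> a * b\<close> by (simp add: divide_le_eq mult_le_cancel_left1)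
  finally show "\<bar>1 / a - 1 / b\<bar> \<le> \<bar>a - b\<bar>" by simp
  have "0 < 1 / a" "1 / a \<le> 1" "0 < 1 / b" "1 / b \<le> 1" using assms by auto
  then show "\<bar>1 / a - 1 / b\<bar> \<le> 1" by linarith
qed

lemma ln_exp1_add_ge_one:
  fixes t :: real
  assumes "0 \<le> t"
  shows "1 \<le> ln (exp 1 + t)"
  using assms by (simp add: ln_ge_iff add_pos_nonneg)

lemma log_Hoelder_small_ball_oscillation:
  fixes p :: "'a::metric_space \<Rightarrow> real"
  assumes p: "\<And>x. 1 \<le> p x" and C: "0 \<le> C"
    and lh: "\<And>x y. dist x y < 1/2 \<Longrightarrow> \<bar>p x - p y\<bar> \<le> - C / ln (dist x y)"
    and R: "0 < R" "R < 1/4"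
  shows "\<exists>\<delta>. 0 \<le> \<delta> \<and> \<delta> \<le> 1 \<and> (\<forall>y\<in>ball x R. \<bar>1 / p y - 1 / p x\<bar> \<le> \<delta>) \<and> \<delta> * \<bar>ln R\<bar> \<le> C"
proof -
  have "ln R < 0" using R by simp
  have osc: "\<bar>1 / p y - 1 / p x\<bar> \<le> C / - ln R" if y: "y \<in> ball x R" for y
  proof (cases "y = x")
    case False
    then have d: "0 < dist x y" "dist x y < R" using y by auto
    then have "ln (dist x y) < ln R" using R by auto
    have "\<bar>1 / p y - 1 / p x\<bar> \<le> \<bar>p x - p y\<bar>"
      using abs_inverse_diff_le(1)[OF p p] by (simp add: abs_minus_commute)
    also have "\<dots> \<le> C / - ln (dist x y)" using lh d R by simp
    also have "\<dots> \<le> C / - ln R"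
      using C \<open>ln (dist x y) < ln R\<close> \<open>ln R < 0\<close>
      by (intro divide_left_mono) (auto intro: mult_neg_neg)
    finally show ?thesis .
  qed (use C \<open>ln R < 0\<close> in \<open>simp add: divide_nonneg_neg\<close>)
  define \<delta> where "\<delta> = min 1 (C / - ln R)"
  have "\<delta> * \<bar>ln R\<bar> = \<delta> * - ln R" using \<open>ln R < 0\<close> by simp
  also have "\<dots> \<le> C / - ln R * - ln R"
    using \<open>ln R < 0\<close> by (intro mult_right_mono) (auto simp: \<delta>_def)
  also have "\<dots> = C" using \<open>ln R < 0\<close> by simp
  finally show ?thesis
    using osc abs_inverse_diff_le(2)[OF p p] C \<open>ln R < 0\<close>
    by (intro exI[of _ \<delta>]) (auto simp: \<delta>_def divide_nonneg_neg)
qed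

lemma abs_ln_le_ln_exp1_add:
  fixes R :: real
  assumes "1/4 \<le> R"
  shows "\<bar>ln R\<bar> \<le> (1 + ln 4) * ln (exp 1 + R)"
proof -
  define l where "l = ln (exp 1 + R)"
  have "1 \<le> l" unfolding l_def using assms by (intro ln_exp1_add_ge_one) simp
  then have "0 \<le> ln 4 * l" "ln 4 \<le> (1 + ln 4) * l"
    using mult_left_mono[OF \<open>1 \<le> l\<close>, of "1 + ln 4"] by auto
  show ?thesis
  proof (cases "1 \<le> R")
    case True
    then have "ln R \<le> l" unfolding l_def by (intro ln_mono) auto
    then show ?thesis using True \<open>0 \<le> ln 4 * l\<close> by (simp add: l_def algebra_simps)
  next
    case False
    have "- ln R \<le> ln 4"
      using assms ln_mono[of "1/4" R] by (simp add: ln_div)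
    then show ?thesis using False assms \<open>ln 4 \<le> (1 + ln 4) * l\<close> by (simp add: l_def)
  qed
qed

lemma log_Hoelder_far_ball_oscillation:
  fixes p :: "'a::real_normed_vector \<Rightarrow> real"
  assumes p: "\<And>x. 1 \<le> p x" and C: "0 \<le> C"
    and lh: "\<And>x. \<bar>p x - p_inf\<bar> \<le> C / ln (exp 1 + norm x)"
    and R: "1/4 \<le> R" "2 * R \<le> norm x"
  shows "\<exists>\<delta>. 0 \<le> \<delta> \<and> \<delta> \<le> 1 \<and> (\<forall>y\<in>ball x R. \<bar>1 / p y - 1 / p x\<bar> \<le> \<delta>) \<and>
    \<delta> * \<bar>ln R\<bar> \<le> 2 * C * (1 + ln 4)"
proof -
  define l where "l = ln (exp 1 + R)"
  have "1 \<le> l" unfolding l_def using R by (intro ln_exp1_add_ge_one) simp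
  have far: "C / ln (exp 1 + norm z) \<le> C / l" if "R \<le> norm z" for z :: 'a
    using that R C ln_exp1_add_ge_one[of R] ln_exp1_add_ge_one[of "norm z"] unfolding l_def
    by (intro divide_left_mono ln_mono mult_pos_pos) (auto intro: add_pos_nonneg)
  have osc: "\<bar>1 / p y - 1 / p x\<bar> \<le> 2 * C / l" if y: "y \<in> ball x R" for y
  proof -
    have "norm x - norm y \<le> dist x y" by (simp add: dist_norm norm_triangle_ineq2)
    then have "R \<le> norm y" using y R by simp
    have "\<bar>1 / p y - 1 / p x\<bar> \<le> \<bar>p y - p_inf\<bar> + \<bar>p x - p_inf\<bar>"
      using abs_inverse_diff_le(1)[OF p p, of y x] by linarith
    also have "\<dots> \<le> C / l + C / l"
      using lh[of x] lh[of y] far[OF \<open>R \<le> norm y\<close>] far[of x] R by linarith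
    finally show ?thesis by simp
  qed
  define \<delta> where "\<delta> = min 1 (2 * C / l)"
  have "\<delta> * \<bar>ln R\<bar> \<le> 2 * C / l * ((1 + ln 4) * l)"
    using abs_ln_le_ln_exp1_add[OF R(1)] C \<open>1 \<le> l\<close> by (intro mult_mono) (auto simp: \<delta>_def l_def)
  also have "\<dots> = 2 * C * (1 + ln 4)" using \<open>1 \<le> l\<close> by simp
  finally show ?thesis
    using osc abs_inverse_diff_le(2)[OF p p] C \<open>1 \<le> l\<close>
    by (intro exI[of _ \<delta>]) (auto simp: \<delta>_def)
qed

lemma critical_radius_ln_radius_le:
  fixes \<rho> :: "'a::euclidean_space \<Rightarrow> real"
  assumes "critical_radius \<rho>"
  obtains K \<theta> where "0 \<le> \<theta>"
    "\<And>x R. 1/4 \<le> R \<Longrightarrow> norm x < 2 * R \<Longrightarrow> \<bar>ln R\<bar> \<le> K + \<theta> * ln (1 + R / \<rho> x)"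
proof -
  obtain c N where c: "1 \<le> c" and N: "1 \<le> N"
    and up: "\<And>x y. \<rho> y \<le> c * \<rho> x * (1 + dist x y / \<rho> x) powr (N / (N + 1))"
    using assms unfolding critical_radius_def by blast
  have \<rho>: "0 < \<rho> x" for x using assms by (simp add: critical_radius_def)
  define a where "a = N / (N + 1)"
  define k where "k = 4 + 2 / \<rho> 0"
  define K where "K = (N + 1) * (ln (c * \<rho> 0) + a * ln k)"
  have "\<bar>ln R\<bar> \<le> K + 2 * ln 4 + (N + 1) * ln (1 + R / \<rho> x)"
    if R: "1/4 \<le> R" "norm x < 2 * R" for x R
  proof -
    have "0 < R" "0 < k" using R \<rho>[of 0] by (auto simp: k_def add_pos_pos)
    have "norm x / \<rho> 0 \<le> 2 * R / \<rho> 0" using R \<rho>[of 0] by (simp add: divide_right_mono)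
    then have "1 + norm x / \<rho> 0 \<le> k * R" using R by (simp add: k_def algebra_simps)
    then have "(1 + norm x / \<rho> 0) powr a \<le> (k * R) powr a"
      using N \<rho>[of 0] by (intro powr_mono2) (auto simp: a_def)
    have "\<rho> x \<le> c * \<rho> 0 * (1 + norm x / \<rho> 0) powr a"
      using up[of x 0] by (simp add: a_def)
    also have "\<dots> \<le> c * \<rho> 0 * (k * R) powr a"
      using \<open>_ powr a \<le> _\<close> c \<rho>[of 0] by (intro mult_left_mono) auto
    finally have "\<rho> x \<le> c * \<rho> 0 * (k * R) powr a" .
    then have "ln (\<rho> x) \<le> ln (c * \<rho> 0 * (k * R) powr a)"
      using \<rho>[of x] by simp
    also have "\<dots> = ln (c * \<rho> 0) + a * ln k + a * ln R"
      using c \<rho>[of 0] \<open>0 < k\<close> \<open>0 < R\<close> by (simp add: ln_mult ln_powr algebra_simps)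
    finally have "ln (\<rho> x) \<le> ln (c * \<rho> 0) + a * ln k + a * ln R" .
    moreover have "ln R - ln (\<rho> x) \<le> ln (1 + R / \<rho> x)"
    proof -
      have "ln R - ln (\<rho> x) = ln (R / \<rho> x)" using \<open>0 < R\<close> \<rho>[of x] by (simp add: ln_div)
      also have "\<dots> \<le> ln (1 + R / \<rho> x)" using \<open>0 < R\<close> \<rho>[of x] by (intro ln_mono) auto
      finally show ?thesis .
    qed
    ultimately have "(N + 1) * (ln R - a * ln R)
        \<le> (N + 1) * (ln (1 + R / \<rho> x) + ln (c * \<rho> 0) + a * ln k)"
      using N by (intro mult_left_mono) auto
    moreover have "(N + 1) * (ln R - a * ln R) = ln R" using N by (simp add: a_def field_simps)
    ultimately have "ln R \<le> K + (N + 1) * ln (1 + R / \<rho> x)" by (simp add: K_def algebra_simps)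
    moreover have "- ln 4 \<le> ln R" using R ln_mono[of "1/4" R] by (simp add: ln_div)
    then have "\<bar>ln R\<bar> \<le> ln R + 2 * ln 4" by (simp add: abs_le_iff)
    ultimately show ?thesis by linarith
  qed
  then show thesis using that[of "N + 1" "K + 2 * ln 4"] N by auto
qed

lemma ball_oscillation_ln_radius_le:
  fixes \<rho> p :: "'a::euclidean_space \<Rightarrow> real"
  assumes "critical_radius \<rho>" "P_log p"
  obtains L \<theta> where "0 \<le> \<theta>"
    "\<And>x R. 0 < R \<Longrightarrow> \<exists>\<delta>. 0 \<le> \<delta> \<and> \<delta> \<le> 1 \<and> (\<forall>y\<in>ball x R. \<bar>1 / p y - 1 / p x\<bar> \<le> \<delta>) \<and>
      \<delta> * \<bar>ln R\<bar> \<le> L + \<theta> * ln (1 + R / \<rho> x)"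
proof -
  have p: "\<And>x. 1 \<le> p x" using assms(2) by (auto simp: P_log_def var_exp_def)
  obtain C p_inf where loc: "\<And>x y. dist x y < 1/2 \<Longrightarrow> \<bar>p x - p y\<bar> \<le> - C / ln (dist x y)"
    and dec: "\<And>x. \<bar>p x - p_inf\<bar> \<le> C / ln (exp 1 + norm x)"
    using assms(2) unfolding P_log_def by blast
  have C: "0 \<le> C" using dec[of 0] by simp
  have "0 \<le> 2 * C * ln 4" using C by simp
  then have C4: "C \<le> 2 * C * (1 + ln 4)" using C by (simp add: distrib_left)
  obtain K \<theta> where \<theta>: "0 \<le> \<theta>"
    and near: "\<And>x R. 1/4 \<le> R \<Longrightarrow> norm x < 2 * R \<Longrightarrow> \<bar>ln R\<bar> \<le> K + \<theta> * ln (1 + R / \<rho> x)"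
    by (rule critical_radius_ln_radius_le[OF assms(1)]) (rule that)
  define L where "L = 2 * C * (1 + ln 4) + \<bar>K\<bar>"
  have "\<exists>\<delta>. 0 \<le> \<delta> \<and> \<delta> \<le> 1 \<and> (\<forall>y\<in>ball x R. \<bar>1 / p y - 1 / p x\<bar> \<le> \<delta>) \<and>
      \<delta> * \<bar>ln R\<bar> \<le> L + \<theta> * ln (1 + R / \<rho> x)"
    if R: "0 < R" for x R
  proof -
    have "0 < \<rho> x" using assms(1) by (simp add: critical_radius_def)
    then have "0 \<le> \<theta> * ln (1 + R / \<rho> x)" using R \<theta> by simp
    then have CL: "2 * C * (1 + ln 4) \<le> L + \<theta> * ln (1 + R / \<rho> x)"
      unfolding L_def using abs_ge_zero[of K] by linarith
    consider "R < 1/4" | "1/4 \<le> R" "2 * R \<le> norm x" | "1/4 \<le> R" "norm x < 2 * R"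
      by fastforce
    then show ?thesis
    proof cases
      case 1
      then obtain \<delta> where \<delta>: "0 \<le> \<delta>" "\<delta> \<le> 1" "\<forall>y\<in>ball x R. \<bar>1 / p y - 1 / p x\<bar> \<le> \<delta>"
        "\<delta> * \<bar>ln R\<bar> \<le> C"
        using log_Hoelder_small_ball_oscillation[OF p C loc R] by blast
      have "\<delta> * \<bar>ln R\<bar> \<le> L + \<theta> * ln (1 + R / \<rho> x)" using \<delta>(4) C4 CL by linarith
      with \<delta> show ?thesis by blast
    next
      case 2
      then obtain \<delta> where \<delta>: "0 \<le> \<delta>" "\<delta> \<le> 1" "\<forall>y\<in>ball x R. \<bar>1 / p y - 1 / p x\<bar> \<le> \<delta>"
        "\<delta> * \<bar>ln R\<bar> \<le> 2 * C * (1 + ln 4)"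
        using log_Hoelder_far_ball_oscillation[OF p C dec] by blast
      have "\<delta> * \<bar>ln R\<bar> \<le> L + \<theta> * ln (1 + R / \<rho> x)" using \<delta>(4) CL by linarith
      with \<delta> show ?thesis by blast
    next
      case 3
      then have "1 * \<bar>ln R\<bar> \<le> L + \<theta> * ln (1 + R / \<rho> x)"
        using near[of R x] C C4 abs_ge_self[of K] unfolding L_def by linarith
      then show ?thesis using abs_inverse_diff_le(2)[OF p p] by (intro exI[of _ 1]) auto
    qed
  qed
  then show thesis using that[of \<theta> L] \<theta> by blast
qed

lemma ln_measure_ball_le:
  fixes x :: "'a::euclidean_space"
  assumes "0 < R"
  shows "\<bar>ln (measure lborel (ball x R))\<bar> \<le> \<bar>ln (unit_ball_vol DIM('a))\<bar> + DIM('a) * \<bar>ln R\<bar>"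
proof -
  have "0 < unit_ball_vol DIM('a)" by simp
  then have "ln (measure lborel (ball x R)) = ln (unit_ball_vol DIM('a)) + DIM('a) * ln R"
    using assms by (simp add: content_ball ln_mult ln_realpow del: unit_ball_vol_pos)
  then show ?thesis by (simp add: abs_mult abs_triangle_ineq[THEN order_trans])
qed

lemma ball_oscillation_estimate:
  fixes \<rho> p :: "'a::euclidean_space \<Rightarrow> real"
  assumes "critical_radius \<rho>" "P_log p"
  obtains L \<theta> where "0 \<le> \<theta>"
    "\<And>x R. 0 < R \<Longrightarrow> \<exists>\<delta>\<ge>0. (\<forall>y\<in>ball x R. \<bar>1 / p y - 1 / p x\<bar> \<le> \<delta>) \<and>
      \<delta> * \<bar>ln (measure lborel (ball x R))\<bar> \<le> L + \<theta> * ln (1 + R / \<rho> x)"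
proof -
  obtain L \<theta> where \<theta>: "0 \<le> \<theta>"
    and osc: "\<And>x R. 0 < R \<Longrightarrow> \<exists>\<delta>. 0 \<le> \<delta> \<and> \<delta> \<le> 1 \<and> (\<forall>y\<in>ball x R. \<bar>1 / p y - 1 / p x\<bar> \<le> \<delta>) \<and>
      \<delta> * \<bar>ln R\<bar> \<le> L + \<theta> * ln (1 + R / \<rho> x)"
    by (rule ball_oscillation_ln_radius_le[OF assms]) (rule that)
  define V where "V = \<bar>ln (unit_ball_vol DIM('a))\<bar>"
  define n where "n = real DIM('a)"
  have "\<exists>\<delta>\<ge>0. (\<forall>y\<in>ball x R. \<bar>1 / p y - 1 / p x\<bar> \<le> \<delta>) \<and>
      \<delta> * \<bar>ln (measure lborel (ball x R))\<bar> \<le> V + n * L + n * \<theta> * ln (1 + R / \<rho> x)"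
    if R: "0 < R" for x R
  proof -
    obtain \<delta> where \<delta>: "0 \<le> \<delta>" "\<delta> \<le> 1" "\<forall>y\<in>ball x R. \<bar>1 / p y - 1 / p x\<bar> \<le> \<delta>"
      "\<delta> * \<bar>ln R\<bar> \<le> L + \<theta> * ln (1 + R / \<rho> x)"
      using osc[OF R] by blast
    have "0 \<le> V" "0 \<le> n" by (auto simp: V_def n_def)
    have "\<delta> * \<bar>ln (measure lborel (ball x R))\<bar> \<le> \<delta> * (V + n * \<bar>ln R\<bar>)"
      using ln_measure_ball_le[OF R] \<delta>(1) by (intro mult_left_mono) (auto simp: V_def n_def)
    also have "\<dots> = \<delta> * V + n * (\<delta> * \<bar>ln R\<bar>)" by (simp add: algebra_simps)
    also have "\<dots> \<le> V + n * (L + \<theta> * ln (1 + R / \<rho> x))"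
      using \<delta> \<open>0 \<le> V\<close> \<open>0 \<le> n\<close> by (intro add_mono mult_left_mono mult_left_le_one_le) auto
    finally have "\<delta> * \<bar>ln (measure lborel (ball x R))\<bar> \<le> V + n * L + n * \<theta> * ln (1 + R / \<rho> x)"
      by (simp add: algebra_simps)
    with \<delta> show ?thesis by blast
  qed
  then show thesis using that[of "n * \<theta>" "V + n * L"] \<theta> by (simp add: n_def)
qed

lemma lux_norm_indicator_ball_mult_le:
  fixes \<rho> p q :: "'a::euclidean_space \<Rightarrow> real"
  assumes crit: "critical_radius \<rho>" and p: "P_log p" "AE y in lborel. 1 < p y"
    and q: "\<And>y. 0 < q y" and pq: "\<And>y. 1 / p y - 1 / q y = 1 - 1 / s"
  obtains L \<theta> where "0 < L" "0 \<le> \<theta>"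
    "\<And>x R. 0 < R \<Longrightarrow> lux_norm q (indicator (ball x R)) * lux_norm (conj_exp p) (indicator (ball x R))
      \<le> ennreal (L * measure lborel (ball x R) powr (1 / s) * (1 + R / \<rho> x) powr \<theta>)"
proof -
  obtain L \<theta> where \<theta>: "0 \<le> \<theta>"
    and osc: "\<And>x R. 0 < R \<Longrightarrow> \<exists>\<delta>\<ge>0. (\<forall>y\<in>ball x R. \<bar>1 / p y - 1 / p x\<bar> \<le> \<delta>) \<and>
      \<delta> * \<bar>ln (measure lborel (ball x R))\<bar> \<le> L + \<theta> * ln (1 + R / \<rho> x)"
    by (rule ball_oscillation_estimate[OF crit p(1)]) (rule that)
  have "lux_norm q (indicator (ball x R)) * lux_norm (conj_exp p) (indicator (ball x R))
      \<le> ennreal (exp (2 * L) * measure lborel (ball x R) powr (1 / s) * (1 + R / \<rho> x) powr (2 * \<theta>))"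
    if R: "0 < R" for x R
  proof -
    have "0 < \<rho> x" using crit by (simp add: critical_radius_def)
    define B where "B = ball x R"
    define m where "m = measure lborel B"
    have m: "0 < m" unfolding m_def B_def using R by (rule content_ball_pos)
    have B: "B \<in> sets lborel" "emeasure lborel B = ennreal m"
      using emeasure_bounded_finite[of B] by (auto simp: B_def m_def emeasure_eq_ennreal_measure)
    obtain \<delta> where \<delta>: "0 \<le> \<delta>" "\<forall>y\<in>B. \<bar>1 / p y - 1 / p x\<bar> \<le> \<delta>"
      "\<delta> * \<bar>ln m\<bar> \<le> L + \<theta> * ln (1 + R / \<rho> x)"
      using osc[OF R] unfolding B_def m_def by blast
    have "\<bar>1 / q y - 1 / q x\<bar> = \<bar>1 / p y - 1 / p x\<bar>" for y
      using pq[of x] pq[of y] by (simp add: abs_minus_commute algebra_simps)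
    then have q_osc: "AE y in lborel. y \<in> B \<longrightarrow> 0 < q y \<and> \<bar>1 / q y - 1 / q x\<bar> \<le> \<delta>"
      using \<delta>(2) q by (intro AE_I2) auto
    have "\<bar>1 - 1 / p y - (1 - 1 / p x)\<bar> = \<bar>1 / p y - 1 / p x\<bar>" for y
      by (simp add: abs_minus_commute)
    then have p_osc: "AE y in lborel. y \<in> B \<longrightarrow>
        0 < conj_exp p y \<and> \<bar>1 / conj_exp p y - (1 - 1 / p x)\<bar> \<le> \<delta>"
      using p(2) by eventually_elim (use \<delta>(2) in \<open>auto simp: conj_exp_inverse\<close>)
    have e: "1 / q x + (1 - 1 / p x) = 1 / s" using pq[of x] by simp
    have "lux_norm q (indicator B) * lux_norm (conj_exp p) (indicator B)
        \<le> ennreal (m powr (1 / s) * exp (2 * (\<delta> * \<bar>ln m\<bar>)))"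
      using lux_norm_indicator_mult_le[OF B m q_osc p_osc] unfolding e .
    also have "\<dots> \<le> ennreal (m powr (1 / s) * exp (2 * (L + \<theta> * ln (1 + R / \<rho> x))))"
      using \<delta>(3) by (intro ennreal_leI mult_left_mono) auto
    also have "\<dots> = ennreal (exp (2 * L) * m powr (1 / s) * (1 + R / \<rho> x) powr (2 * \<theta>))"
      using R \<open>0 < \<rho> x\<close> add_pos_pos[of 1 "R / \<rho> x"] by (simp add: powr_def exp_add algebra_simps)
    finally show ?thesis by (simp add: B_def m_def)
  qed
  then show thesis using that[of "exp (2 * L)" "2 * \<theta>"] \<theta> by simp
qed

section \<open>Powers of weights\<close>

lemma conj_exp_div_conj_exp:
  fixes p q :: "'a \<Rightarrow> real"
  assumes p: "1 < p x" and q: "0 < q x" and s: "1 < s"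
    and pq: "1 / p x - 1 / q x = 1 - 1 / s"
  shows "s < conj_exp p x" "conj_exp (\<lambda>x. conj_exp p x / s) x = q x / s"
proof -
  have "s + p x - p x * s = 1 / q x * (p x * s)"
    using pq p s by (simp add: field_simps)
  then have d: "0 < s + p x - p x * s"
    using p q s by simp
  then show "s < conj_exp p x"
    using p by (simp add: conj_exp_def field_simps)
  have qx: "q x = p x * s / (s + p x - p x * s)"
    using \<open>s + p x - p x * s = _\<close> d p s q by (simp add: field_simps)
  have k: "(p x - 1) * s \<noteq> 0" using p s by simp
  have "conj_exp p x / s = p x / ((p x - 1) * s)" by (simp add: conj_exp_def)
  moreover have "conj_exp p x / s - 1 = (s + p x - p x * s) / ((p x - 1) * s)"
    using p s by (simp add: conj_exp_def field_simps)
  ultimately have "conj_exp (\<lambda>x. conj_exp p x / s) x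
      = p x / ((p x - 1) * s) / ((s + p x - p x * s) / ((p x - 1) * s))"
    by (simp add: conj_exp_def)
  also have "\<dots> = p x / (s + p x - p x * s)"
    using k by simp
  also have "\<dots> = q x / s" using qx s by simp
  finally show "conj_exp (\<lambda>x. conj_exp p x / s) x = q x / s" .
qed

lemma weight_powr_neg:
  fixes w r :: "'a::euclidean_space \<Rightarrow> real"
  assumes w: "weight w" and s: "0 < s"
    and r: "r \<in> borel_measurable lborel" "AE y in lborel. s \<le> r y"
    and fin: "\<And>R. 0 < R \<Longrightarrow> lux_norm r (\<lambda>y. inverse (w y) * indicator (ball 0 R) y) \<noteq> \<infinity>"
  shows "weight (\<lambda>x. w x powr - s)"
proof -
  have wm: "w \<in> borel_measurable lborel" and wpos: "AE y in lborel. 0 < w y"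
    using w by (auto simp: weight_def)
  have "set_integrable lborel K (\<lambda>x. w x powr - s)" if K: "compact K" for K
  proof -
    obtain R where "0 < R" and KR: "K \<subseteq> ball 0 R"
      using bounded_subset_ballD[OF compact_imp_bounded[OF K]] by blast
    define f where "f y = inverse (w y) * indicator (ball 0 R) y" for y
    have fm: "f \<in> borel_measurable lborel"
      unfolding f_def using wm
      by (intro borel_measurable_times borel_measurable_inverse borel_measurable_indicator) auto
    obtain a where "lux_norm r f = ennreal a" "0 \<le> a"
      using fin[OF \<open>0 < R\<close>] unfolding f_def[symmetric]
      by (cases "lux_norm r f" rule: ennreal_cases) auto
    then have "lux_norm r f < ennreal (a + 1)" by (simp add: ennreal_less_iff)
    then obtain t where t: "0 < t" "var_modular r f t \<le> 1" by (rule lux_norm_lessE)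
    have Ks: "K \<in> sets lborel" using K by (simp add: compact_imp_closed)
    have "(\<integral>\<^sup>+ y\<in>K. ennreal (w y powr - s) \<partial>lborel) = (\<integral>\<^sup>+ y\<in>K. ennreal (\<bar>f y\<bar> powr s) \<partial>lborel)"
      using wpos
      by (intro nn_integral_cong_AE, eventually_elim)
        (use KR in \<open>auto simp: f_def powr_minus inverse_powr split: split_indicator\<close>)
    also have "\<dots> \<le> ennreal (t powr s) * (emeasure lborel K + var_modular r f t)"
      using t s Ks fm r by (intro nn_integral_powr_le_var_modular) auto
    also have "\<dots> < \<infinity>"
      using order_le_less_trans[OF t(2) ennreal_one_less_top]
        emeasure_bounded_finite[OF compact_imp_bounded[OF K]]
      by (simp add: ennreal_mult_less_top)
    finally show ?thesis
      unfolding set_integrable_def using wm Ks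
      by (intro integrableI_nonneg) (auto simp: indicator_mult_ennreal mult.commute)
  qed
  then show ?thesis
    using wm wpos by (auto simp: weight_def)
qed

lemma A_rho_pq_ball_estimate:
  fixes \<rho> p q w :: "'a::euclidean_space \<Rightarrow> real"
  assumes w: "A_rho_pq \<rho> p q w" and crit: "critical_radius \<rho>"
    and p: "P_log p" "AE y in lborel. 1 < p y"
    and q: "\<And>y. 0 < q y" and pq: "\<And>y. 1 / p y - 1 / q y = 1 - 1 / s"
  obtains C \<theta> where "0 < C" "0 \<le> \<theta>"
    "\<And>x R. 0 < R \<Longrightarrow>
      lux_norm q (\<lambda>y. w y * indicator (ball x R) y) *
      lux_norm (conj_exp p) (\<lambda>y. inverse (w y) * indicator (ball x R) y)
      \<le> ennreal (C * measure lborel (ball x R) powr (1 / s) * (1 + R / \<rho> x) powr \<theta>)"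
proof -
  obtain \<theta> C where \<theta>: "0 < \<theta>" and C: "0 < C" and H: "\<And>x R. 0 < R \<Longrightarrow>
      lux_norm q (\<lambda>y. w y * indicator (ball x R) y) *
      lux_norm (conj_exp p) (\<lambda>y. inverse (w y) * indicator (ball x R) y)
      \<le> ennreal C * lux_norm q (indicator (ball x R)) *
        lux_norm (conj_exp p) (indicator (ball x R)) *
        ennreal ((1 + R / \<rho> x) powr \<theta>)"
    using w unfolding A_rho_pq_def by blast
  obtain L \<theta>' where L: "0 < L" "0 \<le> \<theta>'" and I: "\<And>x R. 0 < R \<Longrightarrow>
      lux_norm q (indicator (ball x R)) * lux_norm (conj_exp p) (indicator (ball x R))
      \<le> ennreal (L * measure lborel (ball x R) powr (1 / s) * (1 + R / \<rho> x) powr \<theta>')"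
    by (rule lux_norm_indicator_ball_mult_le[OF crit p q pq]) (rule that)
  have "lux_norm q (\<lambda>y. w y * indicator (ball x R) y) *
      lux_norm (conj_exp p) (\<lambda>y. inverse (w y) * indicator (ball x R) y)
      \<le> ennreal (C * L * measure lborel (ball x R) powr (1 / s) * (1 + R / \<rho> x) powr (\<theta>' + \<theta>))"
    if R: "0 < R" for x R
  proof -
    define m where "m = measure lborel (ball x R) powr (1 / s)"
    define F where "F = 1 + R / \<rho> x"
    have "lux_norm q (\<lambda>y. w y * indicator (ball x R) y) *
        lux_norm (conj_exp p) (\<lambda>y. inverse (w y) * indicator (ball x R) y)
        \<le> ennreal C *
          (lux_norm q (indicator (ball x R)) * lux_norm (conj_exp p) (indicator (ball x R))) *
          ennreal (F powr \<theta>)"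
      using H[OF R] by (simp add: F_def mult.assoc)
    also have "\<dots> \<le> ennreal C * ennreal (L * m * F powr \<theta>') * ennreal (F powr \<theta>)"
      using I[OF R] by (intro mult_right_mono mult_left_mono) (auto simp: m_def F_def)
    also have "\<dots> = ennreal (C * L * m * F powr (\<theta>' + \<theta>))"
      using C L by (simp add: m_def powr_add ennreal_mult' mult_ac)
    finally show ?thesis by (simp add: m_def F_def)
  qed
  then show thesis using that[of "C * L" "\<theta>' + \<theta>"] C L \<theta> by auto
qed

lemma lux_norm_powr_neg_weight_mult_le:
  fixes w p q :: "'a::euclidean_space \<Rightarrow> real"
  assumes s: "0 < s" and w: "AE y in lborel. 0 < w y"
    and p: "\<And>y. 1 \<le> p y" and q: "\<And>y. 0 \<le> q y"
    and pq: "AE y in lborel. conj_exp (\<lambda>x. conj_exp p x / s) y = q y / s"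
    and G: "lux_norm q (\<lambda>y. w y * indicator B y) *
      lux_norm (conj_exp p) (\<lambda>y. inverse (w y) * indicator B y) \<le> ennreal G"
  shows "lux_norm (\<lambda>x. conj_exp p x / s) (\<lambda>y. w y powr - s * indicator B y) *
    lux_norm (conj_exp (\<lambda>x. conj_exp p x / s)) (\<lambda>y. inverse (w y powr - s) * indicator B y)
    \<le> ennreal (G powr s)"
proof (rule lux_norm_powr_mult_le[OF s])
  show "0 \<le> conj_exp p y" for y
    using p[of y] by (simp add: conj_exp_def)
  show "AE y in lborel. conj_exp p y / s = conj_exp p y / s \<and>
      \<bar>w y powr - s * indicator B y\<bar> = \<bar>inverse (w y) * indicator B y\<bar> powr s"
    using w
    by eventually_elim (use s in \<open>auto simp: powr_minus inverse_powr split: split_indicator\<close>)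
  show "AE y in lborel. conj_exp (\<lambda>x. conj_exp p x / s) y = q y / s \<and>
      \<bar>inverse (w y powr - s) * indicator B y\<bar> = \<bar>w y * indicator B y\<bar> powr s"
    using w pq by eventually_elim (use s in \<open>auto simp: powr_minus split: split_indicator\<close>)
  show "lux_norm (conj_exp p) (\<lambda>y. inverse (w y) * indicator B y) *
      lux_norm q (\<lambda>y. w y * indicator B y) \<le> ennreal G"
    using G by (simp add: mult.commute)
qed (rule q)

lemma lux_norm_inverse_weight_neq_top:
  fixes w q r :: "'a::euclidean_space \<Rightarrow> real"
  assumes w: "w \<in> borel_measurable lborel" "AE y in lborel. 0 < w y"
    and q: "\<And>y. 1 \<le> q y" and R: "0 < R"
    and G: "lux_norm q (\<lambda>y. w y * indicator (ball x R) y) *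
      lux_norm r (\<lambda>y. inverse (w y) * indicator (ball x R) y) \<le> ennreal G"
  shows "lux_norm r (\<lambda>y. inverse (w y) * indicator (ball x R) y) \<noteq> \<infinity>"
proof -
  have "(\<lambda>y. w y * indicator (ball x R) y) \<in> borel_measurable lborel"
    using w(1) by (intro borel_measurable_times borel_measurable_indicator) auto
  then have "lux_norm q (\<lambda>y. w y * indicator (ball x R) y) \<noteq> 0"
    using R w(2) q content_ball_pos[OF R] emeasure_bounded_finite[of "ball x R"]
    by (intro lux_norm_neq_zero[where B = "ball x R"])
      (auto simp: emeasure_eq_ennreal_measure elim!: eventually_mono)
  then show ?thesis
    using G by (auto simp: ennreal_mult_eq_top_iff top_unique)
qed

lemma A_rho_powr_neg_weight:
  fixes \<rho> p q w :: "'a::euclidean_space \<Rightarrow> real"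
  assumes w: "weight w" and s: "0 < s" and \<rho>: "\<And>x. 0 < \<rho> x"
    and p: "\<And>y. 1 \<le> p y" "p \<in> borel_measurable lborel" and q: "\<And>y. 1 \<le> q y"
    and exps: "AE y in lborel. s < conj_exp p y \<and> conj_exp (\<lambda>x. conj_exp p x / s) y = q y / s"
    and C: "0 < C" "0 \<le> \<theta>"
    and ball: "\<And>x R. 0 < R \<Longrightarrow>
      lux_norm q (\<lambda>y. w y * indicator (ball x R) y) *
      lux_norm (conj_exp p) (\<lambda>y. inverse (w y) * indicator (ball x R) y)
      \<le> ennreal (C * measure lborel (ball x R) powr (1 / s) * (1 + R / \<rho> x) powr \<theta>)"
  shows "A_rho \<rho> (\<lambda>x. conj_exp p x / s) (\<lambda>x. w x powr - s)"
proof -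
  have wm: "w \<in> borel_measurable lborel" and wpos: "AE y in lborel. 0 < w y"
    using w by (auto simp: weight_def)
  have q_exp: "AE y in lborel. conj_exp (\<lambda>x. conj_exp p x / s) y = q y / s"
    using exps by (rule eventually_mono) simp
  have "weight (\<lambda>x. w x powr - s)"
    using s p(2) exps lux_norm_inverse_weight_neq_top[OF wm wpos q _ ball]
    by (intro weight_powr_neg[OF w, where r = "conj_exp p"])
      (auto simp: conj_exp_def elim: eventually_mono)
  moreover have "lux_norm (\<lambda>x. conj_exp p x / s) (\<lambda>y. w y powr - s * indicator (ball x R) y) *
      lux_norm (conj_exp (\<lambda>x. conj_exp p x / s)) (\<lambda>y. inverse (w y powr - s) * indicator (ball x R) y)
      \<le> ennreal (C powr s * measure lborel (ball x R) * (1 + R / \<rho> x) powr (s * \<theta>))"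
    if R: "0 < R" for x R
  proof -
    have "(C * measure lborel (ball x R) powr (1 / s) * (1 + R / \<rho> x) powr \<theta>) powr s
        = C powr s * measure lborel (ball x R) * (1 + R / \<rho> x) powr (s * \<theta>)"
      using C s R \<rho>[of x] by (simp add: powr_mult powr_powr add_nonneg_nonneg mult.commute)
    moreover have "0 \<le> q y" for y using q[of y] by linarith
    ultimately show ?thesis
      using lux_norm_powr_neg_weight_mult_le[OF s wpos p(1) _ q_exp ball[where x = x, OF R]] by simp
  qed
  ultimately show ?thesis
    unfolding A_rho_def using C s by (intro conjI exI[of _ "s * \<theta>"] exI[of _ "C powr s"]) auto
qed

theorem proposition11:
  fixes \<rho> p q w :: "'a::euclidean_space \<Rightarrow> real" and s :: real
  assumes "critical_radius \<rho>"
    and "P_log p" and "P_log q"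
    and "1 < s"
    and "\<exists>pm. 1 < pm \<and> (AE x in lborel. pm \<le> p x)"
    and "\<forall>x. p x < q x"
    and "\<exists>qp. AE x in lborel. q x \<le> qp"
    and "\<forall>x. 1 / p x - 1 / q x = 1 / (s / (s - 1))"
    and "A_rho_pq \<rho> p q w"
  shows "A_rho \<rho> (\<lambda>x. conj_exp p x / s) (\<lambda>x. w x powr (- s))"
proof -
  \<comment> \<open>\<open>p < q\<close> follows from the exponent relation.\<close>
  have s: "1 < s" by fact
  have p: "\<And>y. 1 \<le> p y" "p \<in> borel_measurable lborel" and q: "\<And>y. 1 \<le> q y"
    using assms(2,3) by (auto simp: P_log_def var_exp_def)
  have q0: "0 < q y" for y using q[of y] by linarith
  have p_gt1: "AE y in lborel. 1 < p y"
    using assms(5) by (auto elim: eventually_mono)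
  have pq: "\<And>y. 1 / p y - 1 / q y = 1 - 1 / s"
    using assms(8) s by (simp add: field_simps)
  have exps: "AE y in lborel. s < conj_exp p y \<and> conj_exp (\<lambda>x. conj_exp p x / s) y = q y / s"
    using p_gt1 by eventually_elim (use conj_exp_div_conj_exp[of p _ q s] q0 s pq in auto)
  obtain C \<theta> where C: "0 < C" "0 \<le> \<theta>" and ball: "\<And>x R. 0 < R \<Longrightarrow>
      lux_norm q (\<lambda>y. w y * indicator (ball x R) y) *
      lux_norm (conj_exp p) (\<lambda>y. inverse (w y) * indicator (ball x R) y)
      \<le> ennreal (C * measure lborel (ball x R) powr (1 / s) * (1 + R / \<rho> x) powr \<theta>)"
    by (rule A_rho_pq_ball_estimate[OF assms(9,1,2) p_gt1 q0 pq]) (rule that)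
  have w: "weight w" using assms(9) by (simp add: A_rho_pq_def)
  have \<rho>: "\<And>x. 0 < \<rho> x" using assms(1) by (simp add: critical_radius_def)
  show ?thesis
    using s by (intro A_rho_powr_neg_weight[OF w _ \<rho> p q exps C ball]) auto
qed

end
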